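(* Let $s>0$ and let $n>m>s$ be integers. For an integer $a>s$ set $P_a=\sum_{k=1}^a(-1)^k\binom{2a}{a-k}k^{2s}$. Then $c_{n,s}P_n=c_{m,s}P_m$.
   Context: Let $N\ge1$. $\sigma_s$ is a Borel probability measure on $\mathbb S^{N-1}$ and $\nu_s(U)=\int_0^\infty\int_{\mathbb S^{N-1}}\chi_U(r\theta)r^{-1-2s}\sigma_s(d\theta)\,dr$. $M_{s,\sigma_s}(e)=\int|e\cdot\theta|^{2s}\sigma_s(d\theta)$ and $e_s$ is a maximum point of $M_{s,\sigma_s}$ on $\mathbb S^{N-1}$. For an integer $m>s$, $c_{m,s}>0$ is defined by $\frac2{c_{m,s}}=2^m\int_{\mathbb R^N}(1-\cos(e_s\cdot y))^m\,\nu_s(dy)$. *)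

theory Defs
  imports "HOL-Probability.Probability"
begin

text \<open>The L\'evy-type measure nu_s on R^N (here an abstract euclidean space 'a):
  nu_s(U) = int_0^infty int_sphere chi_U(r theta) r^(-1-2s) sigma(d theta) dr,
  realised as the push-forward of (r^(-1-2s) dr on (0,infty)) x sigma under (r,theta) |-> r theta.\<close>
definition nu_s :: "real \<Rightarrow> 'a::euclidean_space measure \<Rightarrow> 'a measure" where
  "nu_s s \<sigma> = distr
     (pair_measure (density (restrict_space lborel {0<..}) (\<lambda>r. ennreal (r powr (-1 - 2 * s)))) \<sigma>)
     borel (\<lambda>(r, \<theta>). r *\<^sub>R \<theta>)"

definition M_s :: "real \<Rightarrow> 'a::euclidean_space measure \<Rightarrow> 'a \<Rightarrow> real" where
  "M_s s \<sigma> e = (\<integral>\<theta>. \<bar>e \<bullet> \<theta>\<bar> powr (2 * s) \<partial>\<sigma>)"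

definition c_ms :: "nat \<Rightarrow> real \<Rightarrow> 'a::euclidean_space measure \<Rightarrow> 'a \<Rightarrow> real" where
  "c_ms m s \<sigma> e = 2 / (2 ^ m * enn2real (\<integral>\<^sup>+ y. ennreal ((1 - cos (e \<bullet> y)) ^ m) \<partial>(nu_s s \<sigma>)))"

definition P_a :: "nat \<Rightarrow> real \<Rightarrow> real" where
  "P_a a s = (\<Sum>k=1..a. (-1) ^ k * real ((2 * a) choose (a - k)) * real k powr (2 * s))"

end

theory Submission
  imports Defs
begin

text \<open>
  Integrating in polar coordinates gives 2 / c_{m,s} = g A_m, where g = \<integral> |e \<bullet> \<theta>|^(2s) d\<sigma>
  and A_m = \<integral>_0^\<infinity> (2 - 2 cos t)^m t^(-1-2s) dt (\<open>cos_kernel_integral\<close>), so it suffices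
  to show P_m A_n = P_n A_m. Expanding (2 - 2 cos x)^m = \<Sum>_i a_{m,i} cos ((i - m) x)
  (\<open>cos_power_coeff\<close>) and rescaling \<integral>_0^\<infinity> (2 - 2 cos (c t))^n t^(-1-2s) dt = |c|^(2s) A_n gives
    2 P_m A_n = \<Sum>_i a_{m,i} |i - m|^(2s) A_n
             = \<integral>_0^\<infinity> t^(-1-2s) \<Sum>_{i,j} a_{m,i} a_{n,j} cos ((i - m) (j - n) t) dt,
  which is symmetric in m and n.
\<close>

definition cos_power_coeff :: "nat \<Rightarrow> nat \<Rightarrow> real" where
  "cos_power_coeff m i = (-1) ^ (m + i) * real (2 * m choose i)"

lemma two_minus_two_cos_power:
  "(2 - 2 * cos x) ^ m = (\<Sum>i\<le>2*m. cos_power_coeff m i * cos ((real i - real m) * x))"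
proof -
  have "complex_of_real (2 - 2 * cos x) = (-1) * cis (-x) * (- cis x + 1) ^ 2"
    by (simp add: power2_eq_square algebra_simps cis_mult complex_eq_iff)
       (use sin_cos_squared_add[of x] in algebra)
  then have "complex_of_real ((2 - 2 * cos x) ^ m) = (-1) ^ m * cis (-x) ^ m * (- cis x + 1) ^ (2 * m)"
    by (simp only: of_real_power power_mult_distrib power_mult)
  also have "\<dots> = (\<Sum>i\<le>2*m. (-1) ^ m * cis (-x) ^ m * (of_nat (2 * m choose i) * (- cis x) ^ i))"
    by (subst binomial_ring) (simp add: sum_distrib_left)
  also have "\<dots> = (\<Sum>i\<le>2*m. complex_of_real (cos_power_coeff m i) * cis ((real i - real m) * x))"
  proof (rule sum.cong [OF refl])
    fix i
    have "(- cis x) ^ i = (-1) ^ i * cis (real i * x)"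
      by (subst power_minus) (simp add: Complex.DeMoivre)
    moreover have "cis (-x) ^ m = cis (- (real m * x))"
      by (simp add: Complex.DeMoivre)
    ultimately have "cis (-x) ^ m * (- cis x) ^ i = (-1) ^ i * cis ((real i - real m) * x)"
      by (simp add: cis_mult left_diff_distrib)
    then have "(-1) ^ m * cis (-x) ^ m * (of_nat (2 * m choose i) * (- cis x) ^ i)
        = ((-1) ^ m * (-1) ^ i * of_nat (2 * m choose i)) * cis ((real i - real m) * x)"
      by (metis (no_types, lifting) mult.assoc mult.left_commute)
    then show "(-1) ^ m * cis (-x) ^ m * (of_nat (2 * m choose i) * (- cis x) ^ i)
        = complex_of_real (cos_power_coeff m i) * cis ((real i - real m) * x)"
      by (simp add: cos_power_coeff_def power_add)
  qed
  finally have "Re (complex_of_real ((2 - 2 * cos x) ^ m))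
      = Re (\<Sum>i\<le>2*m. complex_of_real (cos_power_coeff m i) * cis ((real i - real m) * x))"
    by (rule arg_cong)
  then show ?thesis
    by simp
qed

lemma two_minus_two_cos_nonneg: "0 \<le> 2 - 2 * cos (t::real)"
  using cos_le_one[of t] by simp

lemma two_minus_two_cos_le_square: "2 - 2 * cos (t::real) \<le> t\<^sup>2"
proof -
  have "2 - 2 * cos t = 4 * sin (t/2) ^ 2"
    using cos_double_sin[of "t/2"] by simp
  also have "sin (t/2) ^ 2 \<le> (t/2) ^ 2"
    using abs_sin_x_le_abs_x[of "t/2"] by (metis abs_ge_zero power2_abs power_mono)
  finally show ?thesis
    by (simp add: power2_eq_square)
qed

definition cos_kernel :: "real \<Rightarrow> nat \<Rightarrow> real \<Rightarrow> real \<Rightarrow> real" where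
  "cos_kernel s N c t = (if 0 < t then (2 - 2 * cos (c * t)) ^ N * t powr (-1 - 2 * s) else 0)"

definition cos_kernel_integral :: "real \<Rightarrow> nat \<Rightarrow> real" where
  "cos_kernel_integral s N = (\<integral>t. cos_kernel s N 1 t \<partial>lborel)"

lemma cos_kernel_measurable [measurable]: "cos_kernel s N c \<in> borel_measurable borel"
  unfolding cos_kernel_def by measurable

lemma cos_kernel_nonneg: "0 \<le> cos_kernel s N c t"
  unfolding cos_kernel_def using two_minus_two_cos_nonneg by auto

lemma cos_kernel_le:
  "cos_kernel s N 1 t
     \<le> indicator {0..1} t * t powr (2 * real N - 1 - 2 * s) + 4 ^ N * indicator {1..} t * t powr (-1 - 2 * s)"
proof (cases "0 < t")
  case t: True
  show ?thesis
  proof (cases "t \<le> 1")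
    case True
    have "(2 - 2 * cos t) ^ N \<le> (t\<^sup>2) ^ N"
      by (intro power_mono two_minus_two_cos_le_square two_minus_two_cos_nonneg)
    also have "(t\<^sup>2) ^ N = t powr real (2 * N)"
      unfolding powr_realpow[OF t] by (simp add: power_mult)
    finally have "cos_kernel s N 1 t \<le> t powr real (2 * N) * t powr (-1 - 2 * s)"
      using t by (simp add: cos_kernel_def mult_right_mono)
    also have "\<dots> = t powr (2 * real N - 1 - 2 * s)"
      by (simp add: powr_add [symmetric] algebra_simps)
    finally show ?thesis
      using t True by (simp add: add_increasing2)
  next
    case False
    have "(2 - 2 * cos t) ^ N \<le> 4 ^ N"
      using cos_ge_minus_one[of t] by (intro power_mono two_minus_two_cos_nonneg) linarith
    then show ?thesis
      using t False by (simp add: cos_kernel_def indicator_def mult_right_mono)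
  qed
qed (simp add: cos_kernel_def)

lemma integrable_cos_kernel_1:
  assumes "s > 0" and "real N > s"
  shows "integrable lborel (cos_kernel s N 1)"
proof -
  have "set_integrable lebesgue {0..1} (\<lambda>t::real. t powr (2 * real N - 1 - 2 * s))"
    using assms by (intro nonnegative_absolutely_integrable_1 integrable_on_powr_from_0) auto
  moreover have "set_integrable lebesgue {1..} (\<lambda>t::real. t powr (-1 - 2 * s))"
    using assms has_integral_powr_to_inf[of "-1 - 2 * s" 1]
    by (intro nonnegative_absolutely_integrable_1) (auto simp: integrable_on_def)
  ultimately have "integrable lebesgue (\<lambda>t. indicator {0..1} t * t powr (2 * real N - 1 - 2 * s)
      + 4 ^ N * indicator {1..} t * t powr (-1 - 2 * s))"
    unfolding set_integrable_def by (auto simp: mult.assoc)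
  then have "integrable lebesgue (cos_kernel s N 1)"
    by (rule Bochner_Integration.integrable_bound)
       (use cos_kernel_le cos_kernel_nonneg in \<open>auto intro: measurable_completion\<close>)
  then show ?thesis
    by (simp add: integrable_completion)
qed

lemma cos_kernel_rescale:
  assumes "c \<noteq> 0"
  shows "cos_kernel s N c t = \<bar>c\<bar> powr (1 + 2 * s) * cos_kernel s N 1 (\<bar>c\<bar> * t)"
proof (cases "0 < t")
  case True
  have "cos (c * t) = cos (\<bar>c\<bar> * t)"
    by (cases "c \<ge> 0") simp_all
  moreover have "(\<bar>c\<bar> * t) powr (-1 - 2 * s) = \<bar>c\<bar> powr (-1 - 2 * s) * t powr (-1 - 2 * s)"
    using True by (simp add: powr_mult)
  moreover have "\<bar>c\<bar> powr (1 + 2 * s) * \<bar>c\<bar> powr (-1 - 2 * s) = 1"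
    using assms by (simp add: powr_add [symmetric])
  ultimately show ?thesis
    using True assms by (simp add: cos_kernel_def mult_ac)
qed (simp add: cos_kernel_def zero_less_mult_iff)

lemma cos_kernel_zero:
  assumes "s > 0" and "real N > s"
  shows "cos_kernel s N 0 = (\<lambda>_. 0)"
  using assms by (auto simp: cos_kernel_def)

lemma integrable_cos_kernel:
  assumes "s > 0" and "real N > s"
  shows "integrable lborel (cos_kernel s N c)"
proof (cases "c = 0")
  case False
  then have "integrable lborel (\<lambda>t. cos_kernel s N 1 (0 + \<bar>c\<bar> * t))"
    by (intro lborel_integrable_real_affine integrable_cos_kernel_1 assms) simp
  then show ?thesis
    using False by (simp add: cos_kernel_rescale [OF False, abs_def])
qed (simp add: cos_kernel_zero [OF assms])

lemma integral_cos_kernel: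
  assumes "s > 0" and "real N > s"
  shows "(\<integral>t. cos_kernel s N c t \<partial>lborel) = \<bar>c\<bar> powr (2 * s) * cos_kernel_integral s N"
proof (cases "c = 0")
  case False
  have "cos_kernel_integral s N = \<bar>c\<bar> * (\<integral>t. cos_kernel s N 1 (0 + \<bar>c\<bar> * t) \<partial>lborel)"
    unfolding cos_kernel_integral_def
    using lborel_integral_real_affine [of "\<bar>c\<bar>" "cos_kernel s N 1" 0] False by simp
  moreover have "\<bar>c\<bar> powr (1 + 2 * s) = \<bar>c\<bar> * \<bar>c\<bar> powr (2 * s)"
    using False by (simp add: powr_add)
  ultimately show ?thesis
    by (simp add: cos_kernel_rescale [OF False])
qed (simp add: cos_kernel_zero [OF assms])

lemma cos_kernel_integral_pos:
  assumes "s > 0" and "real N > s"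
  shows "cos_kernel_integral s N > 0"
proof -
  have "pi powr (-1 - 2 * s) * indicator {pi/2..pi} t \<le> cos_kernel s N 1 t" for t :: real
  proof (cases "t \<in> {pi/2..pi}")
    case True
    then have "t > 0"
      using pi_gt_zero by (auto intro: less_le_trans [of 0 "pi/2"])
    have "cos t \<le> cos (pi/2)"
      using True by (intro cos_monotone_0_pi_le) auto
    then have "1 \<le> (2 - 2 * cos t) ^ N"
      by (intro one_le_power) simp
    moreover have "pi powr (-1 - 2 * s) \<le> t powr (-1 - 2 * s)"
      using assms True \<open>t > 0\<close> by (intro powr_mono2') auto
    ultimately have "1 * pi powr (-1 - 2 * s) \<le> (2 - 2 * cos t) ^ N * t powr (-1 - 2 * s)"
      by (intro mult_mono) auto
    then show ?thesis
      using True \<open>t > 0\<close> by (simp add: cos_kernel_def)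
  qed (simp add: cos_kernel_def)
  then have "(\<integral>t. pi powr (-1 - 2 * s) * indicator {pi/2..pi} t \<partial>lborel) \<le> cos_kernel_integral s N"
    unfolding cos_kernel_integral_def
    using integrable_cos_kernel_1 [OF assms] by (intro integral_mono) auto
  moreover have "(\<integral>t. pi powr (-1 - 2 * s) * indicator {pi/2..pi} t \<partial>lborel) > 0"
    by simp
  ultimately show ?thesis
    by linarith
qed

definition binomial_moment :: "real \<Rightarrow> nat \<Rightarrow> real" where
  "binomial_moment s m = (\<Sum>i\<le>2*m. cos_power_coeff m i * \<bar>real i - real m\<bar> powr (2 * s))"

lemma binomial_moment_mult_cos_kernel_integral:
  assumes "s > 0" and "real n > s"
  shows "binomial_moment s m * cos_kernel_integral s n
    = (\<integral>t. (if 0 < t then t powr (-1 - 2 * s) else 0) *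
        (\<Sum>i\<le>2*m. \<Sum>j\<le>2*n. cos_power_coeff m i * cos_power_coeff n j
           * cos ((real i - real m) * (real j - real n) * t)) \<partial>lborel)"
proof -
  have "binomial_moment s m * cos_kernel_integral s n
      = (\<Sum>i\<le>2*m. cos_power_coeff m i * (\<integral>t. cos_kernel s n (real i - real m) t \<partial>lborel))"
    by (simp add: binomial_moment_def sum_distrib_right integral_cos_kernel [OF assms] mult.assoc)
  also have "\<dots> = (\<integral>t. (\<Sum>i\<le>2*m. cos_power_coeff m i * cos_kernel s n (real i - real m) t) \<partial>lborel)"
    using integrable_cos_kernel [OF assms] by simp
  also have "\<dots> = (\<integral>t. (if 0 < t then t powr (-1 - 2 * s) else 0) *
        (\<Sum>i\<le>2*m. \<Sum>j\<le>2*n. cos_power_coeff m i * cos_power_coeff n j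
           * cos ((real i - real m) * (real j - real n) * t)) \<partial>lborel)"
    by (intro Bochner_Integration.integral_cong refl)
       (simp add: cos_kernel_def two_minus_two_cos_power sum_distrib_left sum_distrib_right mult_ac)
  finally show ?thesis .
qed

lemma binomial_moment_mult_cos_kernel_integral_commute:
  assumes "s > 0" and "real m > s" and "real n > s"
  shows "binomial_moment s m * cos_kernel_integral s n = binomial_moment s n * cos_kernel_integral s m"
  unfolding binomial_moment_mult_cos_kernel_integral [OF assms(1,2)]
    binomial_moment_mult_cos_kernel_integral [OF assms(1,3)]
  by (subst sum.swap) (simp add: mult_ac)

lemma binomial_moment_eq_P_a: "binomial_moment s m = 2 * P_a m s"
proof -
  define f where "f i = cos_power_coeff m i * \<bar>real i - real m\<bar> powr (2 * s)" for i
  have "binomial_moment s m = sum f ({..<m} \<union> {m} \<union> {m<..2*m})"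
    unfolding binomial_moment_def f_def [symmetric] by (intro sum.cong) auto
  also have "\<dots> = sum f {..<m} + f m + sum f {m<..2*m}"
    by (subst sum.union_disjoint; auto)+
  finally have "binomial_moment s m = sum f {..<m} + f m + sum f {m<..2*m}" .
  moreover have "sum f {..<m} = sum f {m<..2*m}"
  proof (rule sum.reindex_bij_witness [where i = "\<lambda>i. 2 * m - i" and j = "\<lambda>i. 2 * m - i"])
    fix i
    assume i: "i \<in> {..<m}"
    then have "m + (2 * m - i) = (m + i) + 2 * (m - i)"
      by simp
    then have "(-1::real) ^ (m + (2 * m - i)) = (-1) ^ (m + i)"
      by (simp add: power_add power_mult)
    with i show "f (2 * m - i) = f i"
      by (auto simp: f_def cos_power_coeff_def binomial_symmetric [symmetric] of_nat_diff)
  qed auto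
  moreover have "sum f {m<..2*m} = P_a m s"
  proof -
    have "sum f {m<..2*m} = sum f {1+m..m+m}"
      by (intro sum.cong) auto
    also have "\<dots> = (\<Sum>k=1..m. f (k + m))"
      by (rule sum.shift_bounds_cl_nat_ivl)
    also have "\<dots> = P_a m s"
      unfolding P_a_def
    proof (intro sum.cong refl)
      fix k
      assume "k \<in> {1..m}"
      then have "2 * m choose (k + m) = 2 * m choose (m - k)"
        using binomial_symmetric [of "k + m" "2 * m"] by simp
      moreover have "(-1::real) ^ (m + (k + m)) = (-1) ^ k"
        by (simp add: power_add flip: mult_2)
      ultimately show "f (k + m) = (-1) ^ k * real (2 * m choose (m - k)) * real k powr (2 * s)"
        by (simp add: f_def cos_power_coeff_def)
    qed
    finally show ?thesis .
  qed
  ultimately show ?thesis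
    by (simp add: f_def)
qed

lemma sets_nu_s [measurable_cong]: "sets (nu_s s \<sigma>) = sets borel"
  by (simp add: nu_s_def)

lemma nn_integral_nu_s:
  fixes \<sigma> :: "'a::euclidean_space measure" and f :: "'a \<Rightarrow> ennreal"
  assumes "sigma_finite_measure \<sigma>" and sets_\<sigma>: "sets \<sigma> = sets borel"
    and [measurable]: "f \<in> borel_measurable borel"
  shows "(\<integral>\<^sup>+y. f y \<partial>nu_s s \<sigma>)
    = (\<integral>\<^sup>+\<theta>. (\<integral>\<^sup>+r\<in>{0<..}. ennreal (r powr (-1 - 2 * s)) * f (r *\<^sub>R \<theta>) \<partial>lborel) \<partial>\<sigma>)"
proof -
  define D where "D = density (restrict_space lborel {0<..}) (\<lambda>r::real. ennreal (r powr (-1 - 2 * s)))"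
  have "sigma_finite_measure (restrict_space lborel {0::real<..})"
    by (rule sigma_finite_measure_restrict_space [OF sigma_finite_lborel]) simp
  then have "sigma_finite_measure D"
    unfolding D_def
    by (subst sigma_finite_measure.sigma_finite_iff_density_finite) (auto intro!: measurable_restrict_space1)
  then interpret pair_sigma_finite D \<sigma>
    using assms(1) by (simp add: pair_sigma_finite_def)
  have [measurable]: "(\<lambda>x. x) \<in> measurable \<sigma> borel"
    by (rule measurable_ident_sets [OF sets_\<sigma>])
  have [measurable]: "(\<lambda>x. x) \<in> measurable D borel"
    unfolding D_def by (auto intro!: measurable_restrict_space1)
  have [measurable]: "(\<lambda>(r, \<theta>). r *\<^sub>R \<theta>) \<in> measurable (D \<Otimes>\<^sub>M \<sigma>) borel"
    by measurable
  have "(\<integral>\<^sup>+y. f y \<partial>nu_s s \<sigma>) = (\<integral>\<^sup>+\<theta>. (\<integral>\<^sup>+r. f (r *\<^sub>R \<theta>) \<partial>D) \<partial>\<sigma>)"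
    unfolding nu_s_def D_def [symmetric]
    by (simp add: nn_integral_distr nn_integral_snd [symmetric] case_prod_beta')
  also have "\<dots> = (\<integral>\<^sup>+\<theta>. (\<integral>\<^sup>+r\<in>{0<..}. ennreal (r powr (-1 - 2 * s)) * f (r *\<^sub>R \<theta>) \<partial>lborel) \<partial>\<sigma>)"
    unfolding D_def
    by (intro nn_integral_cong)
       (simp add: nn_integral_density nn_integral_restrict_space measurable_restrict_space1)
  finally show ?thesis .
qed

lemma nn_integral_nu_s_two_minus_two_cos_power:
  fixes \<sigma> :: "'a::euclidean_space measure" and e :: 'a
  assumes "sigma_finite_measure \<sigma>" and "sets \<sigma> = sets borel" and "s > 0" and "real m > s"
  shows "(\<integral>\<^sup>+y. ennreal ((2 - 2 * cos (e \<bullet> y)) ^ m) \<partial>nu_s s \<sigma>)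
    = (\<integral>\<^sup>+\<theta>. ennreal (\<bar>e \<bullet> \<theta>\<bar> powr (2 * s)) \<partial>\<sigma>) * ennreal (cos_kernel_integral s m)"
proof -
  have "(\<integral>\<^sup>+r\<in>{0<..}. ennreal (r powr (-1 - 2 * s)) * ennreal ((2 - 2 * cos (e \<bullet> (r *\<^sub>R \<theta>))) ^ m)
      \<partial>lborel)
    = ennreal (\<bar>e \<bullet> \<theta>\<bar> powr (2 * s)) * ennreal (cos_kernel_integral s m)" for \<theta>
  proof -
    have "(\<integral>\<^sup>+r\<in>{0<..}. ennreal (r powr (-1 - 2 * s)) * ennreal ((2 - 2 * cos (e \<bullet> (r *\<^sub>R \<theta>))) ^ m)
        \<partial>lborel) = (\<integral>\<^sup>+r. ennreal (cos_kernel s m (e \<bullet> \<theta>) r) \<partial>lborel)"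
      by (intro nn_integral_cong)
         (auto simp: cos_kernel_def ennreal_mult' [symmetric] mult.commute two_minus_two_cos_nonneg)
    also have "\<dots> = ennreal (\<bar>e \<bullet> \<theta>\<bar> powr (2 * s) * cos_kernel_integral s m)"
      using assms(3,4) cos_kernel_nonneg
      by (simp add: nn_integral_eq_integral integrable_cos_kernel integral_cos_kernel)
    finally show ?thesis
      by (simp add: ennreal_mult')
  qed
  then show ?thesis
    using assms by (simp add: nn_integral_nu_s nn_integral_multc)
qed

lemma c_ms_eq:
  fixes \<sigma> :: "'a::euclidean_space measure" and e :: 'a
  assumes "sigma_finite_measure \<sigma>" and "sets \<sigma> = sets borel" and "s > 0" and "real m > s"
  shows "c_ms m s \<sigma> e
    = 2 / (enn2real (\<integral>\<^sup>+\<theta>. ennreal (\<bar>e \<bullet> \<theta>\<bar> powr (2 * s)) \<partial>\<sigma>) * cos_kernel_integral s m)"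
proof -
  have "ennreal ((2 - 2 * cos x) ^ m) = 2 ^ m * ennreal ((1 - cos x) ^ m)" for x :: real
  proof -
    have "(2 - 2 * cos x) ^ m = 2 ^ m * (1 - cos x) ^ m"
      by (simp add: power_mult_distrib [symmetric] right_diff_distrib)
    then show ?thesis
      by (simp add: ennreal_mult' flip: ennreal_power)
  qed
  then have "(2::ennreal) ^ m * (\<integral>\<^sup>+y. ennreal ((1 - cos (e \<bullet> y)) ^ m) \<partial>nu_s s \<sigma>)
      = (\<integral>\<^sup>+y. ennreal ((2 - 2 * cos (e \<bullet> y)) ^ m) \<partial>nu_s s \<sigma>)"
    by (simp add: nn_integral_cmult)
  moreover have "2 ^ m * enn2real (\<integral>\<^sup>+y. ennreal ((1 - cos (e \<bullet> y)) ^ m) \<partial>nu_s s \<sigma>)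
      = enn2real ((2::ennreal) ^ m * (\<integral>\<^sup>+y. ennreal ((1 - cos (e \<bullet> y)) ^ m) \<partial>nu_s s \<sigma>))"
    unfolding enn2real_mult
    by (metis enn2real_ennreal ennreal_numeral ennreal_power zero_le_numeral zero_le_power)
  ultimately have "2 ^ m * enn2real (\<integral>\<^sup>+y. ennreal ((1 - cos (e \<bullet> y)) ^ m) \<partial>nu_s s \<sigma>)
      = enn2real (\<integral>\<^sup>+y. ennreal ((2 - 2 * cos (e \<bullet> y)) ^ m) \<partial>nu_s s \<sigma>)"
    by simp
  also have "\<dots> = enn2real (\<integral>\<^sup>+\<theta>. ennreal (\<bar>e \<bullet> \<theta>\<bar> powr (2 * s)) \<partial>\<sigma>) * cos_kernel_integral s m"
    using cos_kernel_integral_pos [OF assms(3,4)]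
    by (simp add: nn_integral_nu_s_two_minus_two_cos_power [OF assms] enn2real_mult)
  finally show ?thesis
    by (simp add: c_ms_def)
qed

theorem lemma3p3:
  fixes \<sigma> :: "'a::euclidean_space measure" and s :: real and m n :: nat and e :: 'a
  assumes "prob_space \<sigma>" and "sets \<sigma> = sets borel" and "emeasure \<sigma> (sphere 0 1) = 1"
    and "e \<in> sphere 0 1" and "\<forall>e'\<in>sphere 0 1. M_s s \<sigma> e' \<le> M_s s \<sigma> e"
    and "s > 0" and "real m > s" and "n > m"
  shows "c_ms n s \<sigma> e * P_a n s = c_ms m s \<sigma> e * P_a m s"
proof -
  have \<sigma>_finite: "sigma_finite_measure \<sigma>"
    using assms(1) by (rule prob_space_imp_sigma_finite)
  have s: "s > 0" and m: "real m > s" and n: "real n > s"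
    using assms(6-8) by auto
  define g where "g = enn2real (\<integral>\<^sup>+\<theta>. ennreal (\<bar>e \<bullet> \<theta>\<bar> powr (2 * s)) \<partial>\<sigma>)"
  have c_m: "c_ms m s \<sigma> e = 2 / (g * cos_kernel_integral s m)"
    unfolding g_def using \<sigma>_finite assms(2) s m by (rule c_ms_eq)
  have c_n: "c_ms n s \<sigma> e = 2 / (g * cos_kernel_integral s n)"
    unfolding g_def using \<sigma>_finite assms(2) s n by (rule c_ms_eq)
  have "P_a m s * cos_kernel_integral s n = P_a n s * cos_kernel_integral s m"
    using binomial_moment_mult_cos_kernel_integral_commute [OF s m n]
    by (simp add: binomial_moment_eq_P_a)
  \<comment> \<open>If \<open>g = 0\<close> (for instance when the integral is infinite), both constants are \<open>2 / 0 = 0\<close>.\<close>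
  then show ?thesis
    using cos_kernel_integral_pos [OF s m] cos_kernel_integral_pos [OF s n]
    by (cases "g = 0") (simp_all add: c_m c_n field_simps)
qed

end
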